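(* Let $P$ be a span program on $n$ variables over $\mathbb{C}$ with target vector $t=(1,0,\dots,0)\in\mathbb{C}^m$, grouped input vectors $v_j\in\mathbb{C}^m$ for $j\in J$, and literal sets $X_j$. Let $G_P$ be its associated weighted bipartite graph. Fix an input $x\in\{0,1\}^n$. Define $G_P(x)$ by deleting from $G_P$ every input edge $(a_j,b_i)$ such that the literal of $X_j$ indexed by $i\in I_j$ evaluates to true on $x$. Let $H$ be the Hermitian weighted adjacency matrix of $G_P(x)$. Consider the system of linear equations $\sum_u H_{v,u}\psi(u)=0$ for every vertex $v$ of $G_P(x)$ except $v=a_O$, in the unknown vector $\psi\in\mathbb{C}^{V(G_P)}$. Then: (i) this system has a solution with $\psi(a_O)\neq 0$ if and only if $f_P(x)=1$; (ii) this system has a solution with $\psi(b_O)\neq 0$ if and only if $f_P(x)=0$.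
   Context: A span program $P$ over $\mathbb{C}$ on $n$ Boolean variables consists of a nonzero target vector $t\in\mathbb{C}^m$ and vectors $v_j\in\mathbb{C}^m$ indexed by a finite set $J$. Each $v_j$ is labeled by a subset $X_j$ of the literals $\{x_1,\overline{x_1},\dots,x_n,\overline{x_n}\}$. The function $f_P:\{0,1\}^n\to\{0,1\}$ is defined by $f_P(x)=1$ iff there are coefficients $a_j\in\mathbb{C}$ with $\sum_j a_jv_j=t$ and $a_j=0$ whenever some literal in $X_j$ is false on $x$. For each $j$, let $I_j$ be an index set in bijection with $X_j$, and let $I=\bigsqcup_j I_j$ be their disjoint union. Let $C=\{2,\dots,m\}$ index the coordinates other than the first. The graph $G_P$ has vertex set $\{a_O,b_O\}\cup\{a_j:j\in J\}\cup\{b_c:c\in C\}\cup\{b_i:i\in I\}$. Its weighted edges are: - the output edge $(a_O,b_O)$ with weight $1$; - edges $(b_O,a_j)$ with weight $(v_j)_1$; - edges $(b_c,a_j)$ with weight $(v_j)_c$; - input edges $(a_j,b_i)$ for $i\in I_j$ with weight $1$. The Hermitian weighted adjacency matrix $H$ has $H_{b,a}=w$ and $H_{a,b}=\overline{w}$ for each edge between a $b$-vertex $b$ and an $a$-vertex $a$ of weight $w$. All other entries are $0$. *)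

theory Defs
  imports Complex_Main
begin

text \<open>Literals over variables x_1..x_n: (i, True) is x_i, (i, False) is its negation.
  An input x in {0,1}^n is a function nat => bool (only indices 1..n matter).\<close>

type_synonym literal = "nat \<times> bool"

definition lit_true :: "(nat \<Rightarrow> bool) \<Rightarrow> literal \<Rightarrow> bool" where
  "lit_true x l = (x (fst l) = snd l)"

text \<open>Span program P = (target t in C^m, vectors v_j (coordinates 1..m), j in J,
  literal labels X_j). Its function f_P (True means f_P(x) = 1).\<close>

definition span_fun ::
  "nat \<Rightarrow> (nat \<Rightarrow> complex) \<Rightarrow> 'j set \<Rightarrow> ('j \<Rightarrow> nat \<Rightarrow> complex) \<Rightarrow> ('j \<Rightarrow> literal set)
     \<Rightarrow> (nat \<Rightarrow> bool) \<Rightarrow> bool" where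
  "span_fun m t J v X x \<longleftrightarrow>
     (\<exists>a :: 'j \<Rightarrow> complex.
        (\<forall>c\<in>{1..m}. (\<Sum>j\<in>J. a j * v j c) = t c) \<and>
        (\<forall>j\<in>J. (\<exists>l\<in>X j. \<not> lit_true x l) \<longrightarrow> a j = 0))"

text \<open>Vertices of G_P. The index set I_j is taken to be {j} x X_j, so b_i for i in I_j
  is Bi j l with l in X_j (the literal indexed by i).\<close>

datatype 'j vtx = AO | BO | Aj 'j | Bc nat | Bi 'j literal

definition GP_vertices :: "nat \<Rightarrow> 'j set \<Rightarrow> ('j \<Rightarrow> literal set) \<Rightarrow> 'j vtx set" where
  "GP_vertices m J X =
     {AO, BO} \<union> Aj ` J \<union> Bc ` {2..m} \<union> {Bi j l | j l. j \<in> J \<and> l \<in> X j}"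

fun is_avtx :: "'j vtx \<Rightarrow> bool" where
  "is_avtx AO = True"
| "is_avtx (Aj j) = True"
| "is_avtx _ = False"

fun is_bvtx :: "'j vtx \<Rightarrow> bool" where
  "is_bvtx BO = True"
| "is_bvtx (Bc c) = True"
| "is_bvtx (Bi j l) = True"
| "is_bvtx _ = False"

text \<open>Weight of the edge between b-vertex b and a-vertex a in G_P (0 = no edge).\<close>

fun GP_weight :: "('j \<Rightarrow> nat \<Rightarrow> complex) \<Rightarrow> 'j vtx \<Rightarrow> 'j vtx \<Rightarrow> complex" where
  "GP_weight v BO AO = 1"
| "GP_weight v BO (Aj j) = v j 1"
| "GP_weight v (Bc c) (Aj j) = v j c"
| "GP_weight v (Bi j l) (Aj j') = (if j = j' then 1 else 0)"
| "GP_weight v _ _ = 0"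

fun GPx_weight :: "('j \<Rightarrow> nat \<Rightarrow> complex) \<Rightarrow> (nat \<Rightarrow> bool) \<Rightarrow> 'j vtx \<Rightarrow> 'j vtx \<Rightarrow> complex" where
  "GPx_weight v x (Bi j l) a = (if lit_true x l then 0 else GP_weight v (Bi j l) a)"
| "GPx_weight v x b a = GP_weight v b a"

definition GPx_H :: "('j \<Rightarrow> nat \<Rightarrow> complex) \<Rightarrow> (nat \<Rightarrow> bool) \<Rightarrow> 'j vtx \<Rightarrow> 'j vtx \<Rightarrow> complex" where
  "GPx_H v x r s =
     (if is_bvtx r \<and> is_avtx s then GPx_weight v x r s
      else if is_avtx r \<and> is_bvtx s then cnj (GPx_weight v x s r)
      else 0)"

definition solves_sys ::
  "nat \<Rightarrow> 'j set \<Rightarrow> ('j \<Rightarrow> nat \<Rightarrow> complex) \<Rightarrow> ('j \<Rightarrow> literal set) \<Rightarrow> (nat \<Rightarrow> bool)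
     \<Rightarrow> ('j vtx \<Rightarrow> complex) \<Rightarrow> bool" where
  "solves_sys m J v X x \<psi> \<longleftrightarrow>
     (\<forall>r\<in>GP_vertices m J X - {AO}. (\<Sum>s\<in>GP_vertices m J X. GPx_H v x r s * \<psi> s) = 0)"

end

(*
  The Hermitian matrix H of G_P(x) is bipartite, so the equations at b-vertices involve
  only the values of psi on a-vertices, and vice versa.

  On the a-side, the equations at b_O, b_2, ..., b_m say sum_j psi(a_j) v_j = -psi(a_O) t,
  and the equation at an input vertex b_i of a_j whose literal is false forces psi(a_j) = 0.
  Hence -psi(a_j)/psi(a_O) is a witness for f_P(x) = 1, and every witness gives such a psi.

  On the b-side, let the values at b_O, b_2, ..., b_m be the conjugates of a functional w.
  The equation at a_j reads conj <w, v_j> + (values at the surviving input vertices of a_j)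
  = 0, which can always be met when a_j keeps an input edge. So a solution with psi(b_O) =
  conj (w 1) \<noteq> 0 exists iff some w with <w, t> \<noteq> 0 annihilates every v_j all of whose
  literals are true; by the alternative "t is in the span, or a functional separates t
  from it", this happens iff f_P(x) = 0.
*)

theory Submission
  imports Defs
begin

section \<open>A linear-algebra alternative\<close>

definition pairing :: "nat \<Rightarrow> (nat \<Rightarrow> 'a::comm_ring_1) \<Rightarrow> (nat \<Rightarrow> 'a) \<Rightarrow> 'a" where
  "pairing m w u = (\<Sum>c=1..m. w c * u c)"

definition in_span :: "nat \<Rightarrow> ('j \<Rightarrow> nat \<Rightarrow> 'a::comm_ring_1) \<Rightarrow> 'j set \<Rightarrow> (nat \<Rightarrow> 'a) \<Rightarrow> bool" where
  "in_span m v S t \<longleftrightarrow> (\<exists>a. \<forall>c\<in>{1..m}. (\<Sum>j\<in>S. a j * v j c) = t c)"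

definition separates :: "nat \<Rightarrow> (nat \<Rightarrow> 'a::comm_ring_1) \<Rightarrow> ('j \<Rightarrow> nat \<Rightarrow> 'a) \<Rightarrow> 'j set \<Rightarrow> (nat \<Rightarrow> 'a) \<Rightarrow> bool" where
  "separates m w v S t \<longleftrightarrow> pairing m w t \<noteq> 0 \<and> (\<forall>j\<in>S. pairing m w (v j) = 0)"

lemma pairing_diff_left: "pairing m (\<lambda>c. f c - k * g c) u = pairing m f u - k * pairing m g u"
  unfolding pairing_def by (simp add: algebra_simps sum_subtractf sum_distrib_left)

lemma pairing_diff_right: "pairing m w (\<lambda>c. f c - k * g c) = pairing m w f - k * pairing m w g"
  unfolding pairing_def by (simp add: algebra_simps sum_subtractf sum_distrib_left)

lemma pairing_commute: "pairing m w u = pairing m u w"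
  unfolding pairing_def by (simp add: mult.commute)

lemma pairing_unit_left:
  assumes "c0 \<in> {1..m}"
  shows "pairing m (\<lambda>c. if c = c0 then 1 else 0) u = u c0"
proof -
  have "pairing m (\<lambda>c. if c = c0 then 1 else 0) u = (\<Sum>c=1..m. if c = c0 then u c else 0)"
    unfolding pairing_def by (rule sum.cong) auto
  then show ?thesis using assms by (simp add: sum.delta')
qed

lemma in_span_or_separated_empty: "in_span m v {} t \<or> (\<exists>w. separates m w v {} t)"
proof (cases "\<forall>c\<in>{1..m}. t c = 0")
  case False
  then obtain c0 where "c0 \<in> {1..m}" "t c0 \<noteq> 0" by auto
  then have "separates m (\<lambda>c. if c = c0 then 1 else 0) v {} t"
    by (simp add: separates_def pairing_unit_left)
  then show ?thesis by blast
qed (auto simp: in_span_def)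

lemma in_span_insertI:
  assumes "in_span m v S (\<lambda>c. t c - k * v j c)" and "finite S" and "j \<notin> S"
  shows "in_span m v (insert j S) t"
proof -
  obtain a where a: "\<forall>c\<in>{1..m}. (\<Sum>i\<in>S. a i * v i c) = t c - k * v j c"
    using assms(1) unfolding in_span_def by blast
  have "(\<Sum>i\<in>insert j S. (a(j := k)) i * v i c) = k * v j c + (\<Sum>i\<in>S. a i * v i c)" for c
    using assms(2,3) by (auto intro!: sum.cong)
  then have "\<forall>c\<in>{1..m}. (\<Sum>i\<in>insert j S. (a(j := k)) i * v i c) = t c"
    using a by simp
  then show ?thesis unfolding in_span_def by blast
qed

lemma separates_insertI:
  fixes w w' :: "nat \<Rightarrow> 'a::field"
  assumes w: "\<forall>i\<in>S. pairing m w (v i) = 0" and wj: "pairing m w (v j) \<noteq> 0"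
    and w': "separates m w' v S (\<lambda>c. t c - pairing m w t / pairing m w (v j) * v j c)"
  shows "separates m (\<lambda>c. w' c - pairing m w' (v j) / pairing m w (v j) * w c) v (insert j S) t"
proof -
  let ?w = "\<lambda>c. w' c - pairing m w' (v j) / pairing m w (v j) * w c"
  have "pairing m w' (\<lambda>c. t c - pairing m w t / pairing m w (v j) * v j c) = pairing m ?w t"
    unfolding pairing_diff_left pairing_diff_right using wj by (simp add: field_simps)
  then have "pairing m ?w t \<noteq> 0"
    using w' by (simp add: separates_def)
  moreover have "pairing m ?w (v j) = 0"
    unfolding pairing_diff_left using wj by simp
  moreover have "\<forall>i\<in>S. pairing m ?w (v i) = 0"
    unfolding pairing_diff_left using w w' by (simp add: separates_def)
  ultimately show ?thesis by (simp add: separates_def)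
qed

lemma in_span_or_separated:
  fixes v :: "'j \<Rightarrow> nat \<Rightarrow> 'a::field"
  assumes "finite S"
  shows "in_span m v S t \<or> (\<exists>w. separates m w v S t)"
  using assms
proof (induction S arbitrary: t rule: finite_induct)
  case empty
  show ?case by (rule in_span_or_separated_empty)
next
  case (insert j S)
  have shift: "in_span m v (insert j S) t" if "in_span m v S (\<lambda>c. t c - k * v j c)" for k
    using in_span_insertI[OF that insert.hyps] .
  consider "in_span m v S t" | w where "separates m w v S t"
    using insert.IH[of t] by blast
  then show ?case
  proof cases
    case 1
    then show ?thesis using shift[of 0] by simp
  next
    case (2 w)
    show ?thesis
    proof (cases "pairing m w (v j) = 0")
      case True
      then show ?thesis using 2 by (auto simp: separates_def)
    next
      case False
      have "\<forall>i\<in>S. pairing m w (v i) = 0" using 2 by (simp add: separates_def)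
      then show ?thesis
        using insert.IH[of "\<lambda>c. t c - pairing m w t / pairing m w (v j) * v j c"]
          shift separates_insertI[of S m w v j] False by blast
    qed
  qed
qed

section \<open>The equations of \<open>G\<^sub>P(x)\<close>\<close>

lemma sum_GP_vertices:
  assumes "finite J" and "\<forall>j\<in>J. finite (X j)"
  shows "(\<Sum>s\<in>GP_vertices m J X. f s) = f AO + f BO + (\<Sum>j\<in>J. f (Aj j)) + (\<Sum>c=2..m. f (Bc c))
           + (\<Sum>j\<in>J. \<Sum>l\<in>X j. f (Bi j l))"
proof -
  let ?B = "(\<lambda>(j, l). Bi j l) ` Sigma J X"
  have V: "GP_vertices m J X = insert AO (insert BO (Aj ` J \<union> (Bc ` {2..m} \<union> ?B)))"
    unfolding GP_vertices_def by auto
  have fin: "finite (Sigma J X)" using assms by auto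
  have "sum f ?B = (\<Sum>j\<in>J. \<Sum>l\<in>X j. f (Bi j l))"
    using assms by (subst sum.reindex) (auto simp: inj_on_def sum.Sigma case_prod_beta)
  moreover have "sum f (Aj ` J) = (\<Sum>j\<in>J. f (Aj j))" "sum f (Bc ` {2..m}) = (\<Sum>c=2..m. f (Bc c))"
    by (simp_all add: sum.reindex inj_on_def)
  moreover have "sum f (Aj ` J \<union> (Bc ` {2..m} \<union> ?B)) = sum f (Aj ` J) + (sum f (Bc ` {2..m}) + sum f ?B)"
    using assms fin by (subst sum.union_disjoint; auto)+
  moreover have "sum f (insert AO (insert BO (Aj ` J \<union> (Bc ` {2..m} \<union> ?B))))
      = f AO + (f BO + sum f (Aj ` J \<union> (Bc ` {2..m} \<union> ?B)))"
    using assms fin by (subst sum.insert; auto)+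
  ultimately show ?thesis
    unfolding V by (simp add: add.assoc)
qed

lemma row_BO:
  assumes "finite J" and "\<forall>j\<in>J. finite (X j)"
  shows "(\<Sum>s\<in>GP_vertices m J X. GPx_H v x BO s * \<psi> s) = \<psi> AO + (\<Sum>j\<in>J. \<psi> (Aj j) * v j 1)"
  using assms by (simp add: sum_GP_vertices GPx_H_def mult.commute)

lemma row_Bc:
  assumes "finite J" and "\<forall>j\<in>J. finite (X j)"
  shows "(\<Sum>s\<in>GP_vertices m J X. GPx_H v x (Bc c) s * \<psi> s) = (\<Sum>j\<in>J. \<psi> (Aj j) * v j c)"
  using assms by (simp add: sum_GP_vertices GPx_H_def mult.commute)

lemma row_Bi:
  assumes "finite J" and "\<forall>j\<in>J. finite (X j)" and "j \<in> J"
  shows "(\<Sum>s\<in>GP_vertices m J X. GPx_H v x (Bi j l) s * \<psi> s) = (if lit_true x l then 0 else \<psi> (Aj j))"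
proof -
  have "(\<Sum>i\<in>J. (if j = i then 1 else 0) * \<psi> (Aj i)) = (\<Sum>i\<in>J. if j = i then \<psi> (Aj i) else 0)"
    by (rule sum.cong) auto
  also have "\<dots> = \<psi> (Aj j)"
    using assms by (simp add: sum.delta)
  finally have "(\<Sum>i\<in>J. (if j = i then 1 else 0) * \<psi> (Aj i)) = \<psi> (Aj j)" .
  then show ?thesis using assms by (simp add: sum_GP_vertices GPx_H_def)
qed

lemma row_Aj:
  assumes "finite J" and "\<forall>j\<in>J. finite (X j)" and "j \<in> J"
  shows "(\<Sum>s\<in>GP_vertices m J X. GPx_H v x (Aj j) s * \<psi> s) =
    cnj (v j 1) * \<psi> BO + (\<Sum>c=2..m. cnj (v j c) * \<psi> (Bc c))
      + (\<Sum>l\<in>X j. if lit_true x l then 0 else \<psi> (Bi j l))"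
proof -
  have "(\<Sum>i\<in>J. \<Sum>l\<in>X i. GPx_H v x (Aj j) (Bi i l) * \<psi> (Bi i l))
     = (\<Sum>i\<in>J. if j = i then (\<Sum>l\<in>X i. if lit_true x l then 0 else \<psi> (Bi i l)) else 0)"
    by (rule sum.cong) (auto simp: GPx_H_def intro!: sum.cong sum.neutral)
  also have "\<dots> = (\<Sum>l\<in>X j. if lit_true x l then 0 else \<psi> (Bi j l))"
    using assms by (simp add: sum.delta)
  finally show ?thesis using assms by (simp add: sum_GP_vertices GPx_H_def)
qed

lemma ball_GP_vertices_minus_AO:
  "(\<forall>r\<in>GP_vertices m J X - {AO}. P r) \<longleftrightarrow>
     P BO \<and> (\<forall>j\<in>J. P (Aj j)) \<and> (\<forall>c\<in>{2..m}. P (Bc c)) \<and> (\<forall>j\<in>J. \<forall>l\<in>X j. P (Bi j l))"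
  unfolding GP_vertices_def by auto

text \<open>\<open>b\<^sub>O\<close> takes the role of the missing coordinate vertex \<open>b\<^sub>1\<close>.\<close>

definition bcoord :: "('j vtx \<Rightarrow> complex) \<Rightarrow> nat \<Rightarrow> complex" where
  "bcoord \<psi> c = (if c = 1 then \<psi> BO else \<psi> (Bc c))"

lemma sum_bcoord:
  assumes "1 \<le> m"
  shows "(\<Sum>c=1..m. f c * bcoord \<psi> c) = f 1 * \<psi> BO + (\<Sum>c=2..m. f c * \<psi> (Bc c))"
  using assms by (simp add: sum.atLeast_Suc_atMost numeral_2_eq_2 bcoord_def)

lemma solves_sys_iff:
  assumes "finite J" and "\<forall>j\<in>J. finite (X j)" and "1 \<le> m"
  shows "solves_sys m J v X x \<psi> \<longleftrightarrow>
    (\<forall>c\<in>{1..m}. (\<Sum>j\<in>J. \<psi> (Aj j) * v j c) = - \<psi> AO * (if c = 1 then 1 else 0))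
    \<and> (\<forall>j\<in>J. (\<exists>l\<in>X j. \<not> lit_true x l) \<longrightarrow> \<psi> (Aj j) = 0)
    \<and> (\<forall>j\<in>J. (\<Sum>c=1..m. cnj (v j c) * bcoord \<psi> c)
                + (\<Sum>l\<in>X j. if lit_true x l then 0 else \<psi> (Bi j l)) = 0)"
proof -
  have "(\<forall>c\<in>{1..m}. (\<Sum>j\<in>J. \<psi> (Aj j) * v j c) = - \<psi> AO * (if c = 1 then 1 else 0))
     \<longleftrightarrow> \<psi> AO + (\<Sum>j\<in>J. \<psi> (Aj j) * v j 1) = 0 \<and> (\<forall>c\<in>{2..m}. (\<Sum>j\<in>J. \<psi> (Aj j) * v j c) = 0)"
    using assms(3) by (auto simp: add_eq_0_iff2 add.commute)
  then show ?thesis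
    unfolding solves_sys_def ball_GP_vertices_minus_AO sum_bcoord[OF assms(3)]
    using assms by (auto simp: row_BO row_Bc row_Bi row_Aj)
qed

section \<open>Positive and negative witnesses\<close>

definition available :: "(nat \<Rightarrow> bool) \<Rightarrow> 'j set \<Rightarrow> ('j \<Rightarrow> literal set) \<Rightarrow> 'j set" where
  "available x J X = {j\<in>J. \<forall>l\<in>X j. lit_true x l}"

lemma span_fun_iff_in_span_available:
  assumes "finite J"
  shows "span_fun m t J v X x \<longleftrightarrow> in_span m v (available x J X) t"
proof
  assume "span_fun m t J v X x"
  then obtain a where a: "\<forall>c\<in>{1..m}. (\<Sum>j\<in>J. a j * v j c) = t c"
    and a0: "\<forall>j\<in>J. (\<exists>l\<in>X j. \<not> lit_true x l) \<longrightarrow> a j = 0"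
    unfolding span_fun_def by blast
  have "(\<Sum>j\<in>available x J X. a j * v j c) = (\<Sum>j\<in>J. a j * v j c)" for c
    using assms a0 by (intro sum.mono_neutral_left) (auto simp: available_def)
  then show "in_span m v (available x J X) t"
    using a unfolding in_span_def by (intro exI[of _ a]) simp
next
  assume "in_span m v (available x J X) t"
  then obtain a where a: "\<forall>c\<in>{1..m}. (\<Sum>j\<in>available x J X. a j * v j c) = t c"
    unfolding in_span_def by blast
  define a' where "a' j = (if j \<in> available x J X then a j else 0)" for j
  have "(\<Sum>j\<in>J. a' j * v j c) = (\<Sum>j\<in>available x J X. a j * v j c)" for c
    using assms by (intro sum.mono_neutral_cong_right) (auto simp: available_def a'_def)
  then show "span_fun m t J v X x"
    unfolding span_fun_def using a by (intro exI[of _ a']) (auto simp: a'_def available_def)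
qed

lemma span_fun_if_solution_AO:
  assumes "finite J" and "\<forall>j\<in>J. finite (X j)" and "1 \<le> m"
    and "solves_sys m J v X x \<psi>" and "\<psi> AO \<noteq> 0"
  shows "span_fun m (\<lambda>c. if c = 1 then 1 else 0) J v X x"
proof -
  define a where "a j = - \<psi> (Aj j) / \<psi> AO" for j
  have "(\<Sum>j\<in>J. a j * v j c) = - (\<Sum>j\<in>J. \<psi> (Aj j) * v j c) / \<psi> AO" for c
    unfolding a_def by (simp add: sum_divide_distrib sum_negf)
  then show ?thesis
    using assms unfolding span_fun_def solves_sys_iff[OF assms(1-3)]
    by (intro exI[of _ a]) (auto simp: a_def)
qed

lemma solution_AO_if_span_fun:
  assumes "finite J" and "\<forall>j\<in>J. finite (X j)" and "1 \<le> m"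
    and "span_fun m (\<lambda>c. if c = 1 then 1 else 0) J v X x"
  shows "\<exists>\<psi>. solves_sys m J v X x \<psi> \<and> \<psi> AO \<noteq> 0"
proof -
  obtain a where "\<forall>c\<in>{1..m}. (\<Sum>j\<in>J. a j * v j c) = (if c = 1 then 1 else 0)"
    and "\<forall>j\<in>J. (\<exists>l\<in>X j. \<not> lit_true x l) \<longrightarrow> a j = 0"
    using assms(4) unfolding span_fun_def by blast
  then have "solves_sys m J v X x (\<lambda>s. case s of AO \<Rightarrow> -1 | BO \<Rightarrow> 0 | Aj j \<Rightarrow> a j | Bc c \<Rightarrow> 0 | Bi j l \<Rightarrow> 0)"
    unfolding solves_sys_iff[OF assms(1-3)] sum_bcoord[OF assms(3)] by (simp cong: if_cong)
  then show ?thesis by fastforce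
qed

lemma not_span_fun_if_solution_BO:
  assumes "finite J" and "\<forall>j\<in>J. finite (X j)" and "1 \<le> m"
    and "solves_sys m J v X x \<psi>" and "\<psi> BO \<noteq> 0"
  shows "\<not> span_fun m (\<lambda>c. if c = 1 then 1 else 0) J v X x"
proof
  let ?A = "available x J X"
  assume "span_fun m (\<lambda>c. if c = 1 then 1 else 0) J v X x"
  then have "in_span m v ?A (\<lambda>c. if c = 1 then 1 else 0)"
    using span_fun_iff_in_span_available[OF assms(1)] by blast
  then obtain a where a: "\<forall>c\<in>{1..m}. (\<Sum>j\<in>?A. a j * v j c) = (if c = 1 then 1 else 0)"
    unfolding in_span_def by blast
  have "(\<Sum>c=1..m. cnj (v j c) * bcoord \<psi> c) = 0" if "j \<in> ?A" for j
    using that assms(4) unfolding solves_sys_iff[OF assms(1-3)] available_def by auto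
  then have "0 = (\<Sum>j\<in>?A. cnj (a j) * (\<Sum>c=1..m. cnj (v j c) * bcoord \<psi> c))"
    by simp
  also have "\<dots> = (\<Sum>c=1..m. cnj (\<Sum>j\<in>?A. a j * v j c) * bcoord \<psi> c)"
    by (simp add: sum_distrib_left sum_distrib_right cnj_sum mult.assoc sum.swap[of _ ?A])
  also have "\<dots> = (\<Sum>c=1..m. (if c = 1 then 1 else 0) * bcoord \<psi> c)"
    using a by (intro sum.cong) auto
  also have "\<dots> = \<psi> BO"
    using assms(3) by (simp add: sum.atLeast_Suc_atMost bcoord_def)
  finally show False using assms(5) by simp
qed

lemma solution_BO_if_not_span_fun:
  assumes "finite J" and "\<forall>j\<in>J. finite (X j)" and "1 \<le> m"
    and "\<not> span_fun m (\<lambda>c. if c = 1 then 1 else 0) J v X x"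
  shows "\<exists>\<psi>. solves_sys m J v X x \<psi> \<and> \<psi> BO \<noteq> 0"
proof -
  let ?A = "available x J X"
  have "finite ?A" using assms(1) by (simp add: available_def)
  moreover have "\<not> in_span m v ?A (\<lambda>c. if c = 1 then 1 else 0)"
    using assms(4) span_fun_iff_in_span_available[OF assms(1)] by simp
  ultimately obtain w where w: "separates m w v ?A (\<lambda>c. if c = 1 then 1 else 0)"
    using in_span_or_separated by blast
  have "pairing m w (\<lambda>c. if c = 1 then 1 else 0) = w 1"
    using assms(3) by (subst pairing_commute) (simp add: pairing_unit_left)
  then have w1: "w 1 \<noteq> 0" using w by (simp add: separates_def)
  define L where "L j = (SOME l. l \<in> X j \<and> \<not> lit_true x l)" for j
  define \<psi> where
    "\<psi> s = (case s of AO \<Rightarrow> 0 | BO \<Rightarrow> cnj (w 1) | Aj j \<Rightarrow> 0 | Bc c \<Rightarrow> cnj (w c)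
       | Bi j l \<Rightarrow> if l = L j then - cnj (pairing m w (v j)) else 0)" for s
  have row: "(\<Sum>c=1..m. cnj (v j c) * bcoord \<psi> c) = cnj (pairing m w (v j))" for j
    unfolding pairing_def cnj_sum by (intro sum.cong) (auto simp: bcoord_def \<psi>_def mult.commute)
  have "(\<Sum>c=1..m. cnj (v j c) * bcoord \<psi> c) + (\<Sum>l\<in>X j. if lit_true x l then 0 else \<psi> (Bi j l)) = 0"
    if j: "j \<in> J" for j
  proof (cases "j \<in> ?A")
    case True
    then show ?thesis using w row by (auto simp: separates_def available_def intro: sum.neutral)
  next
    case False
    then have "\<exists>l. l \<in> X j \<and> \<not> lit_true x l" using j by (auto simp: available_def)
    then have L: "L j \<in> X j" "\<not> lit_true x (L j)" unfolding L_def by (metis (mono_tags) someI_ex)+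
    have "(\<Sum>l\<in>X j. if lit_true x l then 0 else \<psi> (Bi j l))
        = (\<Sum>l\<in>X j. if l = L j then - cnj (pairing m w (v j)) else 0)"
      using L by (intro sum.cong) (auto simp: \<psi>_def)
    also have "\<dots> = - cnj (pairing m w (v j))"
      using L assms(2) j by (simp add: sum.delta')
    finally show ?thesis using row by simp
  qed
  then have "solves_sys m J v X x \<psi>"
    unfolding solves_sys_iff[OF assms(1-3)] by (simp add: \<psi>_def)
  then show ?thesis using w1 by (auto simp: \<psi>_def)
qed

theorem theorem2p5:
  fixes n m :: nat and J :: "'j set" and v :: "'j \<Rightarrow> nat \<Rightarrow> complex"
    and X :: "'j \<Rightarrow> literal set" and x :: "nat \<Rightarrow> bool"
  assumes "finite J" and "1 \<le> m"
    and "\<forall>j\<in>J. X j \<subseteq> {1..n} \<times> UNIV"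
  shows "((\<exists>\<psi>. solves_sys m J v X x \<psi> \<and> \<psi> AO \<noteq> 0)
           \<longleftrightarrow> span_fun m (\<lambda>c. if c = 1 then 1 else 0) J v X x)
     \<and> ((\<exists>\<psi>. solves_sys m J v X x \<psi> \<and> \<psi> BO \<noteq> 0)
           \<longleftrightarrow> \<not> span_fun m (\<lambda>c. if c = 1 then 1 else 0) J v X x)"
proof -
  have "\<forall>j\<in>J. finite (X j)"
    using assms(3) by (meson finite_SigmaI finite_atLeastAtMost finite_UNIV finite_subset)
  then show ?thesis
    using assms(1,2) span_fun_if_solution_AO solution_AO_if_span_fun
      not_span_fun_if_solution_BO solution_BO_if_not_span_fun
    by metis
qed

end
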